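(* Consider the following slotted system. There are $N\ge2$ users and slots $t=1,\dots,T$. In each slot the BS schedules one user according to a scheduling algorithm $\pi$. Here $\pi$ may be randomized, and its choice in slot $t$ may depend on the adversary's actions in slots before $t$. An adversary uses a blocking matrix $\sigma\in\{0,1\}^{N\times T}$, where $\sigma_i(t)=0$ means user $i$'s channel is blocked in slot $t$. Feasibility means $\sum_{i,t}(1-\sigma_i(t))\le\alpha T$ and at most one user is blocked per slot, where $0<\alpha<1$. The ages satisfy $a_i(1)=1$ and $a_i(t+1)=1$ if user $i$ is scheduled in slot $t$ and $\sigma_i(t)=1$, and $a_i(t+1)=a_i(t)+1$ otherwise. Let $\Delta^{\pi,\sigma}=\frac1T\sum_{t=1}^T\frac1N\sum_{i=1}^N\mathbb{E}[a_i(t)]$ and $\Delta^*(T)=\sup_{\sigma}\inf_{\pi}\Delta^{\pi,\sigma}$, where $\sigma$ ranges over feasible blocking matrices. Let "unif" denote the algorithm that in each slot independently schedules a uniformly random user. Then, with $T\to\infty$ over values with $\alpha T\in\mathbb{Z}$, $$\limsup_{T\to\infty}\frac{\sup_{\sigma}\Delta^{\mathrm{unif},\sigma}}{\Delta^*(T)}\le\frac{1}{\alpha^2}.$$ That is, uniform scheduling is asymptotically $\frac1{\alpha^2}$-optimal.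
   Context: The expectation is over the scheduling randomness. *)

theory Defs
  imports "HOL-Probability.Probability"
begin

text \<open>A blocking matrix is sigma :: nat => nat => bool,
  where sigma i t = True means sigma_i(t) = 1 (channel of user i open in slot t) and
  sigma i t = False means sigma_i(t) = 0 (blocked).\<close>

definition feasible :: "nat \<Rightarrow> real \<Rightarrow> nat \<Rightarrow> (nat \<Rightarrow> nat \<Rightarrow> bool) set" where
  "feasible N \<alpha> T = {\<sigma>.
      real (card {(i, t). i \<in> {1..N} \<and> t \<in> {1..T} \<and> \<not> \<sigma> i t}) \<le> \<alpha> * real T
    \<and> (\<forall>t\<in>{1..T}. card {i. i \<in> {1..N} \<and> \<not> \<sigma> i t} \<le> 1)}"

text \<open>A (randomized, adaptive) scheduling policy: in slot t, given the blocking matrix and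
  the list h of its own previous choices (h ! (s-1) = user scheduled in slot s, s < t),
  it outputs a distribution over users.\<close>

type_synonym policy = "nat \<Rightarrow> (nat \<Rightarrow> nat \<Rightarrow> bool) \<Rightarrow> nat list \<Rightarrow> nat pmf"

definition policies :: "nat \<Rightarrow> policy set" where
  "policies N = {\<pi>.
      (\<forall>t \<sigma> h. set_pmf (\<pi> t \<sigma> h) \<subseteq> {1..N})
    \<and> (\<forall>t \<sigma> \<sigma>' h. (\<forall>i s. s < t \<longrightarrow> \<sigma> i s = \<sigma>' i s) \<longrightarrow> \<pi> t \<sigma> h = \<pi> t \<sigma>' h)}"

primrec sched :: "policy \<Rightarrow> (nat \<Rightarrow> nat \<Rightarrow> bool) \<Rightarrow> nat \<Rightarrow> nat list pmf" where
  "sched \<pi> \<sigma> 0 = return_pmf []"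
| "sched \<pi> \<sigma> (Suc k) =
     bind_pmf (sched \<pi> \<sigma> k) (\<lambda>h. map_pmf (\<lambda>u. h @ [u]) (\<pi> (Suc k) \<sigma> h))"

text \<open>Age a_i(t) (t \<ge> 1) for a schedule s (s t = user scheduled in slot t):
  a_i(1) = 1, a_i(t+1) = 1 if s t = i and sigma_i(t) = 1, else a_i(t) + 1.
  The value at t = 0 is a dummy.\<close>
primrec age :: "(nat \<Rightarrow> nat \<Rightarrow> bool) \<Rightarrow> (nat \<Rightarrow> nat) \<Rightarrow> nat \<Rightarrow> nat \<Rightarrow> nat" where
  "age \<sigma> s i 0 = 1"
| "age \<sigma> s i (Suc t) =
     (if t = 0 then 1 else if s t = i \<and> \<sigma> i t then 1 else age \<sigma> s i t + 1)"

definition avg_age :: "nat \<Rightarrow> nat \<Rightarrow> policy \<Rightarrow> (nat \<Rightarrow> nat \<Rightarrow> bool) \<Rightarrow> real" where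
  "avg_age N T \<pi> \<sigma> = (1 / real T) * (\<Sum>t = 1..T. (1 / real N) * (\<Sum>i = 1..N.
      measure_pmf.expectation (sched \<pi> \<sigma> (t - 1))
        (\<lambda>h. real (age \<sigma> (\<lambda>s. h ! (s - 1)) i t))))"

definition opt_age :: "nat \<Rightarrow> real \<Rightarrow> nat \<Rightarrow> real" where
  "opt_age N \<alpha> T = (SUP \<sigma> \<in> feasible N \<alpha> T. INF \<pi> \<in> policies N. avg_age N T \<pi> \<sigma>)"

definition unif :: "nat \<Rightarrow> policy" where
  "unif N = (\<lambda>t \<sigma> h. pmf_of_set {1..N})"

end

theory Submission
  imports Defs
begin

(* In an open slot the uniform policy serves user i with probability 1/N, so the expected
   age of i evolves by x \<mapsto> 1 + (1 - 1/N) x, whose fixed point is N, while a blocked slot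
   adds 1.  As at most one user is blocked per slot, the expected ages in slot t sum to at
   most t + N^2, hence the uniform policy has average age at most (T + 1)/(2N) + N against
   every feasible adversary.  Conversely, blocking user 1 in the first m = alpha T slots
   forces a_1(t) = t for t \<le> m under every policy, so the optimal average age is at least
   alpha^2 T/(2N).  The ratio is therefore 1/alpha^2 + O(1/T).
*)

lemma expectation_bind_pmf_bounded:
  fixes f :: "'b \<Rightarrow> real"
  assumes "\<And>y. \<bar>f y\<bar> \<le> B"
  shows "measure_pmf.expectation (bind_pmf M K) f =
         measure_pmf.expectation M (\<lambda>x. measure_pmf.expectation (K x) f)"
  unfolding measure_pmf_bind
  by (rule integral_bind[where K = "count_space UNIV" and B = B and B' = 1])
     (use assms in \<open>auto simp: measurable_measure_pmf measure_pmf.emeasure_space_1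
        space_subprob_algebra subprob_space_measure_pmf
        intro: prob_space.finite_measure measure_pmf.prob_space_axioms\<close>)

lemma age_cong: "(\<And>j. 1 \<le> j \<Longrightarrow> j < t \<Longrightarrow> s j = s' j) \<Longrightarrow> age \<sigma> s i t = age \<sigma> s' i t"
  by (induction t) auto

lemma age_le: "age \<sigma> s i t \<le> Suc t"
  by (induction t) auto

lemma age_snoc:
  assumes "length h = k"
  shows "age \<sigma> (\<lambda>s. (h @ [u]) ! (s - 1)) i (Suc (Suc k)) =
         (if u = i \<and> \<sigma> i (Suc k) then 1 else age \<sigma> (\<lambda>s. h ! (s - 1)) i (Suc k) + 1)"
proof -
  have "age \<sigma> (\<lambda>s. (h @ [u]) ! (s - 1)) i (Suc k) = age \<sigma> (\<lambda>s. h ! (s - 1)) i (Suc k)"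
    by (rule age_cong) (use assms in \<open>auto simp: nth_append\<close>)
  then show ?thesis
    using assms by (simp add: nth_append)
qed

declare age.simps [simp del]

lemma length_sched: "h \<in> set_pmf (sched \<pi> \<sigma> k) \<Longrightarrow> length h = k"
  by (induction k arbitrary: h) auto

lemma finite_set_sched_unif: "N \<ge> 1 \<Longrightarrow> finite (set_pmf (sched (unif N) \<sigma> k))"
  by (induction k) (auto simp: unif_def)

definition expected_age :: "policy \<Rightarrow> (nat \<Rightarrow> nat \<Rightarrow> bool) \<Rightarrow> nat \<Rightarrow> nat \<Rightarrow> real" where
  "expected_age \<pi> \<sigma> i t =
     measure_pmf.expectation (sched \<pi> \<sigma> (t - 1)) (\<lambda>h. real (age \<sigma> (\<lambda>s. h ! (s - 1)) i t))"

lemma expected_age_nonneg: "0 \<le> expected_age \<pi> \<sigma> i t"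
  unfolding expected_age_def by (rule Bochner_Integration.integral_nonneg) simp

lemma avg_age_eq_sum_expected_age:
  "avg_age N T \<pi> \<sigma> = (\<Sum>t = 1..T. \<Sum>i = 1..N. expected_age \<pi> \<sigma> i t) / (real T * real N)"
  unfolding avg_age_def expected_age_def by (simp add: sum_distrib_left sum_divide_distrib)

lemma avg_age_nonneg: "0 \<le> avg_age N T \<pi> \<sigma>"
  unfolding avg_age_eq_sum_expected_age by (intro divide_nonneg_nonneg sum_nonneg expected_age_nonneg) simp

lemma expected_age_unif_Suc:
  assumes N: "N \<ge> 1" and i: "i \<in> {1..N}" and t: "t \<ge> 1"
  shows "expected_age (unif N) \<sigma> i (Suc t) =
         (if \<sigma> i t then 1 + (1 - 1 / real N) * expected_age (unif N) \<sigma> i t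
          else expected_age (unif N) \<sigma> i t + 1)"
proof -
  obtain k where k: "t = Suc k" using t by (cases t) auto
  let ?M = "sched (unif N) \<sigma> k"
  let ?a = "\<lambda>h. real (age \<sigma> (\<lambda>s. h ! (s - 1)) i t)"
  let ?a' = "\<lambda>h. real (age \<sigma> (\<lambda>s. h ! (s - 1)) i (Suc t))"
  let ?step = "\<lambda>x. if \<sigma> i t then 1 + (1 - 1 / real N) * x else x + 1"
  have "\<bar>?a' h\<bar> \<le> real (Suc (Suc t))" for h
    using age_le[of \<sigma> _ i "Suc t"] by (simp only: abs_of_nat of_nat_le_iff)
  then have "expected_age (unif N) \<sigma> i (Suc t) =
        measure_pmf.expectation ?M (\<lambda>h. (\<Sum>u = 1..N. ?a' (h @ [u])) / real N)"
    unfolding expected_age_def diff_Suc_1 k sched.simps unif_def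
    using N by (subst expectation_bind_pmf_bounded) (auto simp: integral_pmf_of_set)
  also have "\<dots> = measure_pmf.expectation ?M (\<lambda>h. ?step (?a h))"
  proof (intro integral_cong_AE AE_pmfI)
    fix h assume "h \<in> set_pmf ?M"
    then have "?a' (h @ [u]) = (if u = i then (if \<sigma> i t then 1 else ?a h + 1) else ?a h + 1)" for u
      using age_snoc[of h k \<sigma> u i] length_sched k by auto
    then show "(\<Sum>u = 1..N. ?a' (h @ [u])) / real N = ?step (?a h)"
      using N i by (simp add: sum.delta_remove field_simps)
  qed simp_all
  also have "\<dots> = ?step (expected_age (unif N) \<sigma> i t)"
    using finite_set_sched_unif[OF N]
    by (simp add: expected_age_def k integrable_measure_pmf_finite)
  finally show ?thesis .
qed

lemma expected_age_unif_le:
  assumes N: "N \<ge> 1" and i: "i \<in> {1..N}"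
  shows "expected_age (unif N) \<sigma> i t \<le> real (card {s \<in> {1..<t}. \<not> \<sigma> i s}) + real N"
proof (induction t)
  case (Suc t)
  let ?E = "expected_age (unif N) \<sigma> i"
  let ?b = "\<lambda>t. real (card {s \<in> {1..<t}. \<not> \<sigma> i s})"
  show ?case
  proof (cases "t = 0")
    case False
    then have "{s \<in> {1..<Suc t}. \<not> \<sigma> i s} =
               (if \<sigma> i t then {s \<in> {1..<t}. \<not> \<sigma> i s} else insert t {s \<in> {1..<t}. \<not> \<sigma> i s})"
      by (auto simp: less_Suc_eq)
    then have b_Suc: "?b (Suc t) = ?b t + (if \<sigma> i t then 0 else 1)"
      by simp
    show ?thesis
    proof (cases "\<sigma> i t")
      case True
      have "?E (Suc t) = 1 + (1 - 1 / real N) * ?E t"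
        using expected_age_unif_Suc[OF N i] False True by simp
      also have "\<dots> \<le> 1 + (1 - 1 / real N) * (?b t + real N)"
        using Suc.IH N by (intro add_left_mono mult_left_mono) auto
      also have "\<dots> \<le> ?b t + real N"
        using N by (simp add: field_simps)
      finally show ?thesis
        using b_Suc True by simp
    next
      case False
      then show ?thesis
        using expected_age_unif_Suc[OF N i] \<open>t \<noteq> 0\<close> Suc.IH b_Suc by simp
    qed
  qed (use N in \<open>simp add: expected_age_def age.simps\<close>)
qed (use N in \<open>simp add: expected_age_def age.simps\<close>)

lemma sum_card_filter_swap:
  assumes "finite I" "finite S"
  shows "(\<Sum>i\<in>I. card {s \<in> S. P i s}) = (\<Sum>s\<in>S. card {i \<in> I. P i s})"
proof -
  have "(\<Sum>i\<in>I. card {s \<in> S. P i s}) = (\<Sum>i\<in>I. \<Sum>s\<in>S. of_bool (P i s))"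
    using assms by (simp add: Int_def)
  also have "\<dots> = (\<Sum>s\<in>S. \<Sum>i\<in>I. of_bool (P i s))"
    by (rule sum.swap)
  also have "\<dots> = (\<Sum>s\<in>S. card {i \<in> I. P i s})"
    using assms by (simp add: Int_def)
  finally show ?thesis .
qed

lemma sum_card_blocked_le:
  fixes \<sigma> :: "nat \<Rightarrow> nat \<Rightarrow> bool"
  assumes "\<forall>s\<in>{1..<t}. card {i \<in> {1..N}. \<not> \<sigma> i s} \<le> 1"
  shows "(\<Sum>i = 1..N. card {s \<in> {1..<t}. \<not> \<sigma> i s}) \<le> t - 1"
proof -
  have "(\<Sum>i = 1..N. card {s \<in> {1..<t}. \<not> \<sigma> i s}) = (\<Sum>s = 1..<t. card {i \<in> {1..N}. \<not> \<sigma> i s})"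
    by (rule sum_card_filter_swap) auto
  also have "\<dots> \<le> (\<Sum>s = 1..<t. 1)"
    using assms by (intro sum_mono) auto
  finally show ?thesis
    by simp
qed

lemma avg_age_unif_le:
  assumes N: "N \<ge> 1" and T: "T \<ge> 1" and \<sigma>: "\<sigma> \<in> feasible N \<alpha> T"
  shows "avg_age N T (unif N) \<sigma> \<le> (real T + 1) / (2 * real N) + real N"
proof -
  have "(\<Sum>i = 1..N. expected_age (unif N) \<sigma> i t) \<le> real t + real N * real N" if t: "t \<in> {1..T}" for t
  proof -
    have "(\<Sum>i = 1..N. expected_age (unif N) \<sigma> i t)
          \<le> (\<Sum>i = 1..N. real (card {s \<in> {1..<t}. \<not> \<sigma> i s}) + real N)"
      by (intro sum_mono expected_age_unif_le[OF N]) 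
    also have "\<dots> = real (\<Sum>i = 1..N. card {s \<in> {1..<t}. \<not> \<sigma> i s}) + real N * real N"
      by (simp add: sum.distrib)
    also have "\<dots> \<le> real t + real N * real N"
    proof -
      have "(\<Sum>i = 1..N. card {s \<in> {1..<t}. \<not> \<sigma> i s}) \<le> t"
        using sum_card_blocked_le[of t N \<sigma>] \<sigma> t by (force simp: feasible_def)
      then show ?thesis
        by linarith
    qed
    finally show ?thesis .
  qed
  then have "(\<Sum>t = 1..T. \<Sum>i = 1..N. expected_age (unif N) \<sigma> i t) \<le> (\<Sum>t = 1..T. real t + real N * real N)"
    by (rule sum_mono)
  also have "\<dots> = real T * (real T + 1) / 2 + real T * real N * real N"
    using double_gauss_sum_from_Suc_0[of T, where 'a = real] by (simp add: sum.distrib)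
  finally show ?thesis
    unfolding avg_age_eq_sum_expected_age using N T by (simp add: field_simps)
qed

lemma unif_in_policies: "N \<ge> 1 \<Longrightarrow> unif N \<in> policies N"
  by (simp add: policies_def unif_def)

definition block_first_user :: "nat \<Rightarrow> nat \<Rightarrow> nat \<Rightarrow> bool" where
  "block_first_user m i t \<longleftrightarrow> \<not> (i = 1 \<and> t \<le> m)"

lemma block_first_user_feasible:
  assumes "real m \<le> \<alpha> * real T"
  shows "block_first_user m \<in> feasible N \<alpha> T"
proof -
  have blocked: "{(i, t). i \<in> {1..N} \<and> t \<in> {1..T} \<and> \<not> block_first_user m i t} \<subseteq> {1} \<times> {1..m}"
    by (auto simp: block_first_user_def)
  then have "card {(i, t). i \<in> {1..N} \<and> t \<in> {1..T} \<and> \<not> block_first_user m i t} \<le> m"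
    using card_mono[OF _ blocked] by simp
  moreover have "card {i. i \<in> {1..N} \<and> \<not> block_first_user m i t} \<le> 1" for t
  proof -
    have "{i. i \<in> {1..N} \<and> \<not> block_first_user m i t} \<subseteq> {1}"
      by (auto simp: block_first_user_def)
    then show ?thesis
      using card_mono[of "{1::nat}"] by simp
  qed
  ultimately show ?thesis
    using assms unfolding feasible_def by (simp add: order.trans[OF of_nat_mono])
qed

lemma age_block_first_user: "1 \<le> t \<Longrightarrow> t \<le> Suc m \<Longrightarrow> age (block_first_user m) s 1 t = t"
  by (induction t) (auto simp: age.simps block_first_user_def)

lemma avg_age_block_first_user_ge:
  assumes N: "N \<ge> 1" and m: "m \<le> T"
  shows "real m ^ 2 / (2 * real T * real N) \<le> avg_age N T \<pi> (block_first_user m)"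
proof -
  let ?E = "expected_age \<pi> (block_first_user m)"
  have "real m ^ 2 / 2 \<le> (\<Sum>t = 1..m. real t)"
    using double_gauss_sum_from_Suc_0[of m, where 'a = real] by (simp add: power2_eq_square field_simps)
  also have "\<dots> = (\<Sum>t = 1..m. ?E 1 t)"
  proof (rule sum.cong)
    fix t assume "t \<in> {1..m}"
    then have "age (block_first_user m) s 1 t = t" for s
      by (intro age_block_first_user) auto
    then show "real t = ?E 1 t"
      by (simp add: expected_age_def)
  qed simp
  also have "\<dots> \<le> (\<Sum>t = 1..T. ?E 1 t)"
    using m by (intro sum_mono2) (auto simp: expected_age_nonneg)
  also have "\<dots> \<le> (\<Sum>t = 1..T. \<Sum>i = 1..N. ?E i t)"
    using N by (intro sum_mono member_le_sum) (auto simp: expected_age_nonneg)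
  finally have "real m ^ 2 / 2 / (real T * real N) \<le> avg_age N T \<pi> (block_first_user m)"
    unfolding avg_age_eq_sum_expected_age by (rule divide_right_mono) simp
  then show ?thesis
    by (simp add: mult.assoc)
qed

lemma opt_age_ge:
  assumes N: "N \<ge> 1" and T: "T \<ge> 1" and m: "real m \<le> \<alpha> * real T" "m \<le> T"
  shows "real m ^ 2 / (2 * real T * real N) \<le> opt_age N \<alpha> T"
proof -
  have "bdd_above ((\<lambda>\<sigma>. INF \<pi> \<in> policies N. avg_age N T \<pi> \<sigma>) ` feasible N \<alpha> T)"
  proof (rule bdd_aboveI2)
    fix \<sigma> assume \<sigma>: "\<sigma> \<in> feasible N \<alpha> T"
    have "(INF \<pi> \<in> policies N. avg_age N T \<pi> \<sigma>) \<le> avg_age N T (unif N) \<sigma>"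
      by (rule cINF_lower[OF bdd_belowI2[OF avg_age_nonneg] unif_in_policies[OF N]])
    also have "\<dots> \<le> (real T + 1) / (2 * real N) + real N"
      by (rule avg_age_unif_le[OF N T \<sigma>])
    finally show "(INF \<pi> \<in> policies N. avg_age N T \<pi> \<sigma>) \<le> (real T + 1) / (2 * real N) + real N" .
  qed
  moreover have "real m ^ 2 / (2 * real T * real N) \<le> (INF \<pi> \<in> policies N. avg_age N T \<pi> (block_first_user m))"
    using unif_in_policies[OF N] avg_age_block_first_user_ge[OF N m(2)] by (auto intro: cINF_greatest)
  ultimately show ?thesis
    unfolding opt_age_def using block_first_user_feasible[OF m(1)] by (blast intro: cSUP_upper2)
qed

lemma sup_avg_age_unif_le:
  assumes N: "N \<ge> 1" and T: "T \<ge> 1" and \<alpha>: "\<alpha> \<ge> 0"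
  shows "(SUP \<sigma> \<in> feasible N \<alpha> T. avg_age N T (unif N) \<sigma>) \<le> (real T + 1) / (2 * real N) + real N"
  using block_first_user_feasible[of 0 \<alpha> T N] \<alpha> avg_age_unif_le[OF N T]
  by (intro cSUP_least) auto

lemma competitive_ratio_unif_le:
  assumes N: "N \<ge> 1" and \<alpha>: "0 < \<alpha>" "\<alpha> \<le> 1" and T: "T \<ge> 1" and "\<alpha> * real T \<in> \<int>"
  shows "(SUP \<sigma> \<in> feasible N \<alpha> T. avg_age N T (unif N) \<sigma>) / opt_age N \<alpha> T
         \<le> 1 / \<alpha>\<^sup>2 + ((1 + 2 * (real N)\<^sup>2) / \<alpha>\<^sup>2) / real T"
proof -
  have "\<alpha> * real T \<in> \<nat>"
    using \<open>\<alpha> * real T \<in> \<int>\<close> \<alpha> by (simp add: Nats_altdef2)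
  then obtain m where m: "real m = \<alpha> * real T"
    by (metis Nats_cases)
  have "real m \<le> real T"
    using m \<alpha> mult_left_le_one_le[of "real T" \<alpha>] by simp
  then have "m \<le> T"
    by simp
  have lower: "\<alpha>\<^sup>2 * real T / (2 * real N) \<le> opt_age N \<alpha> T"
    using opt_age_ge[OF N T _ \<open>m \<le> T\<close>] m T by (simp add: power2_eq_square field_simps)
  have "(SUP \<sigma> \<in> feasible N \<alpha> T. avg_age N T (unif N) \<sigma>) / opt_age N \<alpha> T
        \<le> ((real T + 1) / (2 * real N) + real N) / (\<alpha>\<^sup>2 * real T / (2 * real N))"
    using N T \<alpha> by (intro frac_le sup_avg_age_unif_le lower) auto
  also have "\<dots> = 1 / \<alpha>\<^sup>2 + ((1 + 2 * (real N)\<^sup>2) / \<alpha>\<^sup>2) / real T"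
    using N T \<alpha> by (simp add: power2_eq_square field_simps)
  finally show ?thesis .
qed

lemma Limsup_le_of_eventually_le_add_tendsto_0:
  fixes f g :: "'a \<Rightarrow> real"
  assumes "\<forall>\<^sub>F x in F. f x \<le> c + g x" and "(g \<longlongrightarrow> 0) F"
  shows "Limsup F (\<lambda>x. ereal (f x)) \<le> ereal c"
proof (cases "F = bot")
  case False
  have "Limsup F (\<lambda>x. ereal (f x)) \<le> Limsup F (\<lambda>x. ereal (c + g x))"
    using assms(1) by (intro Limsup_mono) simp
  also have "\<dots> = ereal c"
    using False assms(2) by (intro lim_imp_Limsup) (auto intro!: tendsto_eq_intros)
  finally show ?thesis .
qed simp

theorem theorem3:
  fixes N :: nat and \<alpha> :: real
  assumes "N \<ge> 2" and "0 < \<alpha>" and "\<alpha> < 1"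
  shows "Limsup (inf sequentially (principal {T. \<alpha> * real T \<in> \<int>}))
           (\<lambda>T. ereal ((SUP \<sigma> \<in> feasible N \<alpha> T. avg_age N T (unif N) \<sigma>) / opt_age N \<alpha> T))
         \<le> ereal (1 / \<alpha>\<^sup>2)"
proof (rule Limsup_le_of_eventually_le_add_tendsto_0)
  let ?c = "(1 + 2 * (real N)\<^sup>2) / \<alpha>\<^sup>2"
  show "\<forall>\<^sub>F T in inf sequentially (principal {T. \<alpha> * real T \<in> \<int>}).
          (SUP \<sigma> \<in> feasible N \<alpha> T. avg_age N T (unif N) \<sigma>) / opt_age N \<alpha> T \<le> 1 / \<alpha>\<^sup>2 + ?c / real T"
    unfolding eventually_inf_principal eventually_sequentially
    using assms competitive_ratio_unif_le[of N \<alpha>] by auto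
  show "((\<lambda>T. ?c / real T) \<longlongrightarrow> 0) (inf sequentially (principal {T. \<alpha> * real T \<in> \<int>}))"
    by (rule tendsto_mono[OF inf_le1 lim_const_over_n])
qed

end
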